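(* Let $q$ be a prime with $q \equiv 3 \pmod 8$ (there are infinitely many such primes). Let $n \geq 1$ be an integer, $v = 3q^n$, and $k$ an odd positive integer. Then there are no integers $a_1, \ldots, a_k$ with $1 \leq a_j < v$ such that $\prod_{j=1}^k a_j = \prod_{j=1}^k (v - a_j)$. *)

theory Defs
  imports "HOL-Computational_Algebra.Primes"
begin

end

theory Submission
  imports Defs "HOL-Number_Theory.Number_Theory"
begin

text \<open>Let \<open>h = (q - 1)/2\<close>, which is odd. Strip the common power \<open>q\<^sup>g\<close> from \<open>a\<close> and
  \<open>v - a\<close>, leaving cofactors \<open>b\<close> and \<open>c\<close>. Either \<open>g < n\<close>, so \<open>c \<equiv> -b (mod q)\<close>, or \<open>g = n\<close>
  and \<open>{b, c} = {1, 2}\<close>; since 2 is a non-residue modulo \<open>q \<equiv> 3 (mod 8)\<close>, in both cases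
  \<open>c\<^sup>h \<equiv> -b\<^sup>h (mod q)\<close>. The product equation forces \<open>\<Prod>b = \<Prod>c\<close>, so raising to the \<open>h\<close>-th
  power gives \<open>B\<^sup>h \<equiv> (-1)\<^sup>k B\<^sup>h = -B\<^sup>h\<close> for \<open>B = \<Prod>b\<close>, which is prime to \<open>q\<close>: a contradiction.\<close>

lemma two_pow_half_cong_neg_one:
  assumes "prime q" and "q mod 8 = 3"
  shows "[2 ^ ((q - 1) div 2) = - 1] (mod int q)"
proof -
  obtain m where m: "q = 8 * m + 3"
    using assms(2) by (metis div_mod_decomp mult.commute)
  interpret GAUSS q 2
    by unfold_locales (use assms(1) m in \<open>auto simp: cong_0_iff zdvd_not_zless\<close>)
  have half: "(int q - 1) div 2 = 4 * int m + 1"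
    using m by simp
  have "C = (\<lambda>x. 2 * x) ` {0<..4 * int m + 1}"
    unfolding C_def B_def A_def half image_image
    by (rule image_cong) (auto simp: m)
  \<comment> \<open>Gauss' lemma: the doubles exceeding \<open>q/2\<close> are \<open>2x\<close> for \<open>2m < x \<le> 4m + 1\<close>.\<close>
  then have "E = (\<lambda>x. 2 * x) ` {2 * int m + 1..4 * int m + 1}"
    unfolding E_def half by auto
  then have "card E = 2 * m + 1"
    by (simp add: card_image inj_on_def)
  then have "Legendre 2 q = -1"
    using gauss_lemma by simp
  then show ?thesis
    using euler_criterion[OF assms(1), of 2] m by (simp add: cong_sym)
qed

lemma prod_ne_if_pow_cong_neg:
  fixes p :: int and b c :: "'a \<Rightarrow> int"
  assumes "prime p" and "\<not> p dvd 2" and "finite I" and "odd (card I)"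
    and "\<And>j. j \<in> I \<Longrightarrow> \<not> p dvd b j"
    and "\<And>j. j \<in> I \<Longrightarrow> [c j ^ h = - (b j ^ h)] (mod p)"
  shows "prod b I \<noteq> prod c I"
proof
  assume eq: "prod b I = prod c I"
  define B where "B = prod b I"
  have "B ^ h = (\<Prod>j\<in>I. c j ^ h)"
    using eq by (simp add: B_def prod_power_distrib)
  also have "[\<dots> = (\<Prod>j\<in>I. (-1) * b j ^ h)] (mod p)"
    by (rule cong_prod) (simp add: assms(6))
  also have "(\<Prod>j\<in>I. (-1) * b j ^ h) = - (B ^ h)"
    using assms(4) unfolding B_def prod.distrib prod_constant by (simp add: prod_power_distrib)
  finally have "p dvd 2 * B ^ h"
    by (simp add: cong_iff_dvd_diff)
  then have "p dvd B"
    using assms(1,2) by (meson prime_dvd_mult_iff prime_dvd_power)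
  then show False
    using assms(1,3,5) by (auto simp: B_def prime_dvd_prod_iff)
qed

lemma complement_cofactor_pow_cong:
  fixes q n :: nat and v a :: int
  assumes q: "prime q" "q mod 8 = 3" and v: "v = 3 * int q ^ n" and a: "1 \<le> a" "a < v"
  defines "g \<equiv> multiplicity (int q) a"
  shows "int q ^ g dvd v - a"
    and "[((v - a) div int q ^ g) ^ ((q - 1) div 2) = - ((a div int q ^ g) ^ ((q - 1) div 2))]
           (mod int q)"
proof -
  let ?h = "(q - 1) div 2" and ?Q = "int q"
  define b where "b = a div ?Q ^ g"
  define c where "c = 3 * ?Q ^ (n - g) - b"
  have q3: "3 \<le> q"
    using q(2) mod_less_eq_dividend[of q 8] by linarith
  have ab: "a = ?Q ^ g * b"
    unfolding b_def g_def by (simp add: multiplicity_dvd)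
  have "0 < ?Q ^ g * b"
    using a ab by linarith
  then have b_pos: "b > 0"
    using q3 by (simp add: zero_less_mult_iff)
  have "g \<le> n"
  proof (rule ccontr)
    assume "\<not> g \<le> n"
    have "v \<le> ?Q ^ Suc n"
      using v q3 by simp
    also have "\<dots> \<le> ?Q ^ g"
      using \<open>\<not> g \<le> n\<close> q3 by (intro power_increasing) auto
    also have "\<dots> \<le> a"
      using ab b_pos q3 by simp
    finally show False
      using a by simp
  qed
  then have vac: "v - a = ?Q ^ g * c"
    by (simp add: v ab c_def algebra_simps flip: power_add)
  obtain m where "q = 8 * m + 3"
    using q(2) by (metis div_mod_decomp mult.commute)
  then have "odd ?h"
    by simp
  have "[c ^ ?h = - (b ^ ?h)] (mod ?Q)"
  proof (cases "g < n")
    case True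
    then have "[c = - b] (mod ?Q)"
      by (simp add: c_def cong_iff_dvd_diff)
    then have "[c ^ ?h = (- b) ^ ?h] (mod ?Q)"
      by (rule cong_pow)
    with \<open>odd ?h\<close> show ?thesis
      by simp
  next
    case False
    with \<open>g \<le> n\<close> have "b < 3"
      using ab a v q3 by simp
    then have "b = 1 \<and> c = 2 \<or> b = 2 \<and> c = 1"
      using b_pos False \<open>g \<le> n\<close> by (auto simp: c_def)
    then show ?thesis
      using two_pow_half_cong_neg_one[OF q]
      by (auto simp: cong_iff_dvd_diff dvd_minus_iff add.commute)
  qed
  then show "?Q ^ g dvd v - a" and "[((v - a) div ?Q ^ g) ^ ?h = - ((a div ?Q ^ g) ^ ?h)] (mod ?Q)"
    using vac q3 by (simp_all add: b_def)
qed

theorem corollary4p13: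
  fixes q :: nat and n k :: nat and v :: int
  assumes "prime q" and "q mod 8 = 3" and "n \<ge> 1"
    and "v = 3 * int q ^ n" and "odd k" and "k \<ge> 1"
  shows "\<not> (\<exists>a :: nat \<Rightarrow> int. (\<forall>j\<in>{1..k}. 1 \<le> a j \<and> a j < v) \<and>
           (\<Prod>j=1..k. a j) = (\<Prod>j=1..k. v - a j))"
proof
  assume "\<exists>a :: nat \<Rightarrow> int. (\<forall>j\<in>{1..k}. 1 \<le> a j \<and> a j < v) \<and>
           (\<Prod>j=1..k. a j) = (\<Prod>j=1..k. v - a j)"
  then obtain a :: "nat \<Rightarrow> int"
    where a: "\<And>j. j \<in> {1..k} \<Longrightarrow> 1 \<le> a j" "\<And>j. j \<in> {1..k} \<Longrightarrow> a j < v"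
    and eq: "(\<Prod>j=1..k. a j) = (\<Prod>j=1..k. v - a j)"
    by blast
  let ?Q = "int q"
  define g where "g j = multiplicity ?Q (a j)" for j
  define b where "b j = a j div ?Q ^ g j" for j
  define c where "c j = (v - a j) div ?Q ^ g j" for j
  note complement = complement_cofactor_pow_cong[OF assms(1,2,4) a]
  have "?Q ^ (\<Sum>j=1..k. g j) * (\<Prod>j=1..k. b j) = ?Q ^ (\<Sum>j=1..k. g j) * (\<Prod>j=1..k. c j)"
  proof -
    have "(\<Prod>j=1..k. a j) = (\<Prod>j=1..k. ?Q ^ g j * b j)"
      by (simp add: b_def g_def multiplicity_dvd)
    moreover have "(\<Prod>j=1..k. v - a j) = (\<Prod>j=1..k. ?Q ^ g j * c j)"
      by (rule prod.cong) (simp_all add: c_def g_def complement(1))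
    ultimately show ?thesis
      using eq by (simp add: prod.distrib power_sum)
  qed
  then have "(\<Prod>j=1..k. b j) = (\<Prod>j=1..k. c j)"
    using assms(1) by (simp add: prime_gt_0_nat)
  moreover have "\<not> ?Q dvd b j" if "j \<in> {1..k}" for j
    using a(1)[OF that] prime_gt_1_nat[OF assms(1)]
    unfolding b_def g_def by (intro multiplicity_decompose) auto
  moreover have "[c j ^ ((q - 1) div 2) = - (b j ^ ((q - 1) div 2))] (mod ?Q)" if "j \<in> {1..k}" for j
    using complement(2)[OF that that] unfolding b_def c_def g_def .
  moreover have "\<not> ?Q dvd 2"
    using assms(2) by (auto dest: zdvd_imp_le)
  ultimately show False
    using prod_ne_if_pow_cong_neg[of ?Q "{1..k}" b c "(q - 1) div 2"] assms(1,5) by simp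
qed

end
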